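(* For each $n\ge0$, the presheaf $B_n$ is a projective object in the abelian category $\mathcal{Mod}(\mathcal A)$.
   Context: $\mathcal S$ is the category of variables of an information structure: a small poset category with terminal object $\mathbf 1$, finite-dimensional nerve, and such that whenever $Z\to X$ and $Z\to Y$ the categorical product $XY:=X\wedge Y$ exists. It carries the trivial topology (every presheaf is a sheaf). For $X\in\mathrm{Ob}\,\mathcal S$, $\mathcal S_X=\{Y: X\to Y\}$ is a commutative monoid under the product, and $\mathcal A_X=\mathbb R[\mathcal S_X]$ its monoid algebra; $X\mapsto\mathcal A_X$ is a presheaf of rings $\mathcal A$ (an arrow $X\to Y$ induces the inclusion $\mathcal A_Y\subseteq\mathcal A_X$). $\mathcal{Mod}(\mathcal A)$ is the category of presheaves of $\mathcal A$-modules (presheaves $F$ of abelian groups with each $F(X)$ an $\mathcal A_X$-module compatibly with restrictions) and $\mathcal A$-linear natural transformations. $B_n(X)$ is the free $\mathcal A_X$-module on the symbols $[X_1|\dots|X_n]$ with $X_1,\dots,X_n\in\mathcal S_X$, with restriction maps induced by the inclusions $\mathcal S_Y\subseteq\mathcal S_X$. *)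

theory Defs
  imports Complex_Main "HOL-Algebra.Module"
begin

text \<open>An information structure: a set S of variables with a partial order arr,
  where arr X Y means there is an arrow X \<rightarrow> Y (Y is coarser than X).\<close>

definition info_structure :: "'a set \<Rightarrow> ('a \<Rightarrow> 'a \<Rightarrow> bool) \<Rightarrow> 'a \<Rightarrow> bool" where
  "info_structure S arr top1 \<longleftrightarrow>
     (\<forall>X\<in>S. arr X X) \<and>
     (\<forall>X\<in>S. \<forall>Y\<in>S. \<forall>Z\<in>S. arr X Y \<longrightarrow> arr Y Z \<longrightarrow> arr X Z) \<and>
     (\<forall>X\<in>S. \<forall>Y\<in>S. arr X Y \<longrightarrow> arr Y X \<longrightarrow> X = Y) \<and>
     top1 \<in> S \<and> (\<forall>X\<in>S. arr X top1) \<and>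
     (\<exists>d::nat. \<forall>xs. set xs \<subseteq> S \<and> sorted_wrt (\<lambda>x y. arr x y \<and> x \<noteq> y) xs
                     \<longrightarrow> length xs \<le> d) \<and>
     (\<forall>X\<in>S. \<forall>Y\<in>S. \<forall>Z\<in>S. arr Z X \<and> arr Z Y \<longrightarrow>
        (\<exists>P\<in>S. arr P X \<and> arr P Y \<and> (\<forall>W\<in>S. arr W X \<and> arr W Y \<longrightarrow> arr W P)))"

definition meet :: "'a set \<Rightarrow> ('a \<Rightarrow> 'a \<Rightarrow> bool) \<Rightarrow> 'a \<Rightarrow> 'a \<Rightarrow> 'a" where
  "meet S arr X Y = (THE P. P \<in> S \<and> arr P X \<and> arr P Y \<and> (\<forall>W\<in>S. arr W X \<and> arr W Y \<longrightarrow> arr W P))"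

definition SX :: "'a set \<Rightarrow> ('a \<Rightarrow> 'a \<Rightarrow> bool) \<Rightarrow> 'a \<Rightarrow> 'a set" where
  "SX S arr X = {Y \<in> S. arr X Y}"

text \<open>The monoid algebra A_X = R[S_X], elements are finitely supported real functions
  with support in S_X; multiplication is convolution with respect to the product.
  For X \<rightarrow> Y, A_Y is literally a subset of A_X.\<close>
definition alg :: "'a set \<Rightarrow> ('a \<Rightarrow> 'a \<Rightarrow> bool) \<Rightarrow> 'a \<Rightarrow> 'a \<Rightarrow> ('a \<Rightarrow> real) ring" where
  "alg S arr top1 X = \<lparr>carrier = {f. finite {Y. f Y \<noteq> 0} \<and> {Y. f Y \<noteq> 0} \<subseteq> SX S arr X},
     mult = (\<lambda>f g Z. \<Sum>(Y, W) \<in> {(Y, W). f Y \<noteq> 0 \<and> g W \<noteq> 0 \<and> meet S arr Y W = Z}. f Y * g W),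
     one = (\<lambda>Y. if Y = top1 then 1 else 0),
     zero = (\<lambda>Y. 0),
     add = (\<lambda>f g Y. f Y + g Y)\<rparr>"

definition presheaf_mod ::
  "'a set \<Rightarrow> ('a \<Rightarrow> 'a \<Rightarrow> bool) \<Rightarrow> 'a \<Rightarrow> ('a \<Rightarrow> ('a \<Rightarrow> real, 'm) module)
     \<Rightarrow> ('a \<Rightarrow> 'a \<Rightarrow> 'm \<Rightarrow> 'm) \<Rightarrow> bool" where
  "presheaf_mod S arr top1 F res \<longleftrightarrow>
     (\<forall>X\<in>S. module (alg S arr top1 X) (F X)) \<and>
     (\<forall>X\<in>S. \<forall>Y\<in>S. arr X Y \<longrightarrow>
        res X Y \<in> carrier (F Y) \<rightarrow> carrier (F X) \<and>
        (\<forall>x\<in>carrier (F Y). \<forall>y\<in>carrier (F Y).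
            res X Y (x \<oplus>\<^bsub>F Y\<^esub> y) = res X Y x \<oplus>\<^bsub>F X\<^esub> res X Y y) \<and>
        (\<forall>a\<in>carrier (alg S arr top1 Y). \<forall>x\<in>carrier (F Y).
            res X Y (a \<odot>\<^bsub>F Y\<^esub> x) = a \<odot>\<^bsub>F X\<^esub> res X Y x)) \<and>
     (\<forall>X\<in>S. \<forall>x\<in>carrier (F X). res X X x = x) \<and>
     (\<forall>X\<in>S. \<forall>Y\<in>S. \<forall>Z\<in>S. arr X Y \<longrightarrow> arr Y Z \<longrightarrow>
        (\<forall>x\<in>carrier (F Z). res X Y (res Y Z x) = res X Z x))"

definition presheaf_mod_hom ::
  "'a set \<Rightarrow> ('a \<Rightarrow> 'a \<Rightarrow> bool) \<Rightarrow> 'a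
     \<Rightarrow> ('a \<Rightarrow> ('a \<Rightarrow> real, 'm) module) \<Rightarrow> ('a \<Rightarrow> 'a \<Rightarrow> 'm \<Rightarrow> 'm)
     \<Rightarrow> ('a \<Rightarrow> ('a \<Rightarrow> real, 'n) module) \<Rightarrow> ('a \<Rightarrow> 'a \<Rightarrow> 'n \<Rightarrow> 'n)
     \<Rightarrow> ('a \<Rightarrow> 'm \<Rightarrow> 'n) \<Rightarrow> bool" where
  "presheaf_mod_hom S arr top1 F resF G resG \<phi> \<longleftrightarrow>
     (\<forall>X\<in>S. \<phi> X \<in> carrier (F X) \<rightarrow> carrier (G X) \<and>
        (\<forall>x\<in>carrier (F X). \<forall>y\<in>carrier (F X).
            \<phi> X (x \<oplus>\<^bsub>F X\<^esub> y) = \<phi> X x \<oplus>\<^bsub>G X\<^esub> \<phi> X y) \<and>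
        (\<forall>a\<in>carrier (alg S arr top1 X). \<forall>x\<in>carrier (F X).
            \<phi> X (a \<odot>\<^bsub>F X\<^esub> x) = a \<odot>\<^bsub>G X\<^esub> \<phi> X x)) \<and>
     (\<forall>X\<in>S. \<forall>Y\<in>S. arr X Y \<longrightarrow>
        (\<forall>x\<in>carrier (F Y). \<phi> X (resF X Y x) = resG X Y (\<phi> Y x)))"

definition presheaf_mod_epi where
  "presheaf_mod_epi S arr top1 F resF G resG \<phi> \<longleftrightarrow>
     presheaf_mod_hom S arr top1 F resF G resG \<phi> \<and>
     (\<forall>X\<in>S. \<phi> X ` carrier (F X) = carrier (G X))"

text \<open>Projective object, relative to the element types 'm, 'n of the other objects
  (which are arbitrary, since the theorem is universally quantified over types).\<close>
definition projective ::
  "'m itself \<Rightarrow> 'n itself \<Rightarrow> 'a set \<Rightarrow> ('a \<Rightarrow> 'a \<Rightarrow> bool) \<Rightarrow> 'a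
     \<Rightarrow> ('a \<Rightarrow> ('a \<Rightarrow> real, 'p) module) \<Rightarrow> ('a \<Rightarrow> 'a \<Rightarrow> 'p \<Rightarrow> 'p) \<Rightarrow> bool" where
  "projective _ _ S arr top1 P resP \<longleftrightarrow>
     presheaf_mod S arr top1 P resP \<and>
     (\<forall>(F :: 'a \<Rightarrow> ('a \<Rightarrow> real, 'm) module) resF (G :: 'a \<Rightarrow> ('a \<Rightarrow> real, 'n) module) resG e f.
        presheaf_mod S arr top1 F resF \<longrightarrow> presheaf_mod S arr top1 G resG \<longrightarrow>
        presheaf_mod_epi S arr top1 F resF G resG e \<longrightarrow>
        presheaf_mod_hom S arr top1 P resP G resG f \<longrightarrow>
        (\<exists>g. presheaf_mod_hom S arr top1 P resP F resF g \<and>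
             (\<forall>X\<in>S. \<forall>x\<in>carrier (P X). e X (g X x) = f X x)))"

text \<open>The presheaf B_n: B_n(X) is the free A_X-module on the symbols [X_1|...|X_n]
  (lists of length n over S_X), represented as finitely supported functions from symbols
  to A_X. The ring fields mult/top1 are irrelevant for modules and set to zero.\<close>
definition Bsym :: "'a set \<Rightarrow> ('a \<Rightarrow> 'a \<Rightarrow> bool) \<Rightarrow> nat \<Rightarrow> 'a \<Rightarrow> 'a list set" where
  "Bsym S arr n X = {xs. length xs = n \<and> set xs \<subseteq> SX S arr X}"

definition Bmod :: "'a set \<Rightarrow> ('a \<Rightarrow> 'a \<Rightarrow> bool) \<Rightarrow> 'a \<Rightarrow> nat \<Rightarrow> 'a
     \<Rightarrow> ('a \<Rightarrow> real, 'a list \<Rightarrow> 'a \<Rightarrow> real) module" where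
  "Bmod S arr top1 n X = \<lparr>carrier = {m. finite {s. m s \<noteq> (\<lambda>Y. 0)} \<and>
        (\<forall>s. m s \<in> carrier (alg S arr top1 X)) \<and>
        (\<forall>s. m s \<noteq> (\<lambda>Y. 0) \<longrightarrow> s \<in> Bsym S arr n X)},
     mult = (\<lambda>m m' s Y. 0),
     one = (\<lambda>s Y. 0),
     zero = (\<lambda>s Y. 0),
     add = (\<lambda>m m' s Y. m s Y + m' s Y),
     smult = (\<lambda>a m s. a \<otimes>\<^bsub>alg S arr top1 X\<^esub> m s)\<rparr>"

text \<open>Restriction maps of B_n are induced by the inclusions S_Y \<subseteq> S_X: the identity.\<close>
definition Bres :: "'a \<Rightarrow> 'a \<Rightarrow> ('a list \<Rightarrow> 'a \<Rightarrow> real) \<Rightarrow> ('a list \<Rightarrow> 'a \<Rightarrow> real)" where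
  "Bres X Y m = m"

end

(*
  B_n(X) is free over A_X on the symbols s = [X_1|...|X_n] with X_i in S_X, and such a symbol
  is already a symbol at the product M s = X_1 ... X_n, through which X factors whenever s is a
  symbol at X. Given an epimorphism e : F -> G and a morphism f : B_n -> G, choose once for each
  symbol a preimage u_s in F(M s) of f_{M s}[s] and send [s] in B_n(X) to the restriction of u_s
  to X. Freeness makes this A_X-linear, functoriality of the restrictions of F makes it natural,
  and naturality of e and f shows that it lifts f.
*)

theory Submission
  imports Defs
begin

section \<open>Products of variables\<close>

lemma meet_commute: "meet S arr Y W = meet S arr W Y"
  unfolding meet_def by (metis (no_types, lifting))

locale information_structure =
  fixes S :: "'a set" and arr :: "'a \<Rightarrow> 'a \<Rightarrow> bool" and top1 :: 'a
  assumes info_structure: "info_structure S arr top1"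
begin

lemma arr_refl: "X \<in> S \<Longrightarrow> arr X X"
  using info_structure unfolding info_structure_def by blast

lemma arr_trans: "\<lbrakk>X \<in> S; Y \<in> S; Z \<in> S; arr X Y; arr Y Z\<rbrakk> \<Longrightarrow> arr X Z"
  using info_structure unfolding info_structure_def by blast

lemma arr_antisym: "\<lbrakk>X \<in> S; Y \<in> S; arr X Y; arr Y X\<rbrakk> \<Longrightarrow> X = Y"
  using info_structure unfolding info_structure_def by blast

lemma top_in: "top1 \<in> S"
  using info_structure unfolding info_structure_def by blast

lemma arr_top: "X \<in> S \<Longrightarrow> arr X top1"
  using info_structure unfolding info_structure_def by blast

lemma glb_exists:
  assumes "X \<in> S" "Y \<in> S" "Z \<in> S" "arr Z X" "arr Z Y"
  obtains P where "P \<in> S" "arr P X" "arr P Y" "\<And>W. \<lbrakk>W \<in> S; arr W X; arr W Y\<rbrakk> \<Longrightarrow> arr W P"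
proof -
  have "\<forall>X\<in>S. \<forall>Y\<in>S. \<forall>Z\<in>S. arr Z X \<and> arr Z Y \<longrightarrow>
        (\<exists>P\<in>S. arr P X \<and> arr P Y \<and> (\<forall>W\<in>S. arr W X \<and> arr W Y \<longrightarrow> arr W P))"
    using info_structure unfolding info_structure_def by (elim conjE)
  then show thesis using assms that by blast
qed

lemma meet_eqI:
  assumes "P \<in> S" "arr P Y" "arr P W" "\<And>V. \<lbrakk>V \<in> S; arr V Y; arr V W\<rbrakk> \<Longrightarrow> arr V P"
  shows "meet S arr Y W = P"
  unfolding meet_def
proof (rule the_equality)
  fix Q assume "Q \<in> S \<and> arr Q Y \<and> arr Q W \<and> (\<forall>V\<in>S. arr V Y \<and> arr V W \<longrightarrow> arr V Q)"
  then show "Q = P" using assms arr_antisym by blast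
qed (use assms in blast)

lemma SX_mono: "\<lbrakk>X \<in> S; Y \<in> S; arr X Y\<rbrakk> \<Longrightarrow> SX S arr Y \<subseteq> SX S arr X"
  unfolding SX_def using arr_trans by blast

lemma top_in_SX: "X \<in> S \<Longrightarrow> top1 \<in> SX S arr X"
  unfolding SX_def using top_in arr_top by blast

context
  fixes X :: 'a
  assumes X: "X \<in> S"
begin

lemma meet_glb:
  assumes "Y \<in> SX S arr X" "W \<in> SX S arr X"
  shows meet_in_SX: "meet S arr Y W \<in> SX S arr X"
    and meet_lower1: "arr (meet S arr Y W) Y"
    and meet_lower2: "arr (meet S arr Y W) W"
    and meet_greatest: "\<And>V. \<lbrakk>V \<in> S; arr V Y; arr V W\<rbrakk> \<Longrightarrow> arr V (meet S arr Y W)"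
proof -
  have YW: "Y \<in> S" "W \<in> S" "arr X Y" "arr X W" using assms unfolding SX_def by auto
  obtain P where P: "P \<in> S" "arr P Y" "arr P W" "\<And>V. \<lbrakk>V \<in> S; arr V Y; arr V W\<rbrakk> \<Longrightarrow> arr V P"
    using glb_exists[OF YW(1,2) X YW(3,4)] by blast
  have "meet S arr Y W = P" by (rule meet_eqI[OF P])
  then show "meet S arr Y W \<in> SX S arr X" "arr (meet S arr Y W) Y" "arr (meet S arr Y W) W"
    "\<And>V. \<lbrakk>V \<in> S; arr V Y; arr V W\<rbrakk> \<Longrightarrow> arr V (meet S arr Y W)"
    using P YW X unfolding SX_def by auto
qed

lemma meet_assoc:
  assumes Y: "Y \<in> SX S arr X" and W: "W \<in> SX S arr X" and V: "V \<in> SX S arr X"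
  shows "meet S arr (meet S arr Y W) V = meet S arr Y (meet S arr W V)"
proof (rule meet_eqI)
  let ?WV = "meet S arr W V" and ?YW = "meet S arr Y W" and ?R = "meet S arr Y (meet S arr W V)"
  have in_S: "Y \<in> S" "W \<in> S" "V \<in> S" "?WV \<in> S" "?YW \<in> S" "?R \<in> S"
    using Y W V meet_in_SX[OF Y W] meet_in_SX[OF W V] meet_in_SX[OF Y meet_in_SX[OF W V]]
    unfolding SX_def by auto
  have R: "arr ?R Y" "arr ?R W" "arr ?R V"
    using meet_lower1[OF Y meet_in_SX[OF W V]] meet_lower2[OF Y meet_in_SX[OF W V]]
      meet_lower1[OF W V] meet_lower2[OF W V] arr_trans in_S by blast+
  show "?R \<in> S" "arr ?R V" using in_S R by auto
  show "arr ?R ?YW" using meet_greatest[OF Y W] in_S R by blast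
  fix U assume U: "U \<in> S" "arr U ?YW" "arr U V"
  have "arr U Y" "arr U W"
    using U meet_lower1[OF Y W] meet_lower2[OF Y W] arr_trans in_S by blast+
  then show "arr U ?R"
    using U meet_greatest[OF W V] meet_greatest[OF Y meet_in_SX[OF W V]] by blast
qed

end

lemma meet_top_left: "Y \<in> S \<Longrightarrow> meet S arr top1 Y = Y"
  by (rule meet_eqI) (auto simp: arr_refl arr_top)

end

section \<open>The monoid algebras A_X\<close>

definition supp :: "('a \<Rightarrow> real) \<Rightarrow> 'a set" where
  "supp f = {Y. f Y \<noteq> 0}"

lemma carrier_alg_iff:
  "f \<in> carrier (alg S arr top1 X) \<longleftrightarrow> finite (supp f) \<and> supp f \<subseteq> SX S arr X"
  by (simp add: alg_def supp_def)

lemma alg_add: "f \<oplus>\<^bsub>alg S arr top1 X\<^esub> g = (\<lambda>Y. f Y + g Y)"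
  and alg_zero: "\<zero>\<^bsub>alg S arr top1 X\<^esub> = (\<lambda>Y. 0)"
  and alg_one: "\<one>\<^bsub>alg S arr top1 X\<^esub> = (\<lambda>Y. if Y = top1 then 1 else 0)"
  by (simp_all add: alg_def)

lemma alg_mult_indep: "f \<otimes>\<^bsub>alg S arr top1 X\<^esub> g = f \<otimes>\<^bsub>alg S arr top1 Y\<^esub> g"
  by (simp add: alg_def)

lemma alg_mult_eq_sum:
  assumes "finite A" "finite B" "supp f \<subseteq> A" "supp g \<subseteq> B"
  shows "(f \<otimes>\<^bsub>alg S arr top1 X\<^esub> g) Z =
    (\<Sum>Y\<in>A. \<Sum>W\<in>B. if meet S arr Y W = Z then f Y * g W else 0)"
proof -
  let ?P = "\<lambda>p. f (fst p) \<noteq> 0 \<and> g (snd p) \<noteq> 0 \<and> meet S arr (fst p) (snd p) = Z"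
  have "{(Y, W). f Y \<noteq> 0 \<and> g W \<noteq> 0 \<and> meet S arr Y W = Z} = {p \<in> A \<times> B. ?P p}"
    using assms(3,4) unfolding supp_def by auto
  then have "(f \<otimes>\<^bsub>alg S arr top1 X\<^esub> g) Z = (\<Sum>p\<in>{p \<in> A \<times> B. ?P p}. f (fst p) * g (snd p))"
    by (simp add: alg_def case_prod_beta)
  also have "\<dots> = (\<Sum>p\<in>A \<times> B. if ?P p then f (fst p) * g (snd p) else 0)"
    using assms by (simp add: sum.inter_filter)
  also have "\<dots> = (\<Sum>p\<in>A \<times> B. if meet S arr (fst p) (snd p) = Z then f (fst p) * g (snd p) else 0)"
    by (rule sum.cong) auto
  finally show ?thesis
    by (simp add: sum.cartesian_product case_prod_beta)
qed

lemma supp_alg_mult: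
  assumes "finite (supp f)" "finite (supp g)"
  shows "supp (f \<otimes>\<^bsub>alg S arr top1 X\<^esub> g) \<subseteq> (\<lambda>(Y, W). meet S arr Y W) ` (supp f \<times> supp g)"
proof
  fix Z assume Z: "Z \<in> supp (f \<otimes>\<^bsub>alg S arr top1 X\<^esub> g)"
  show "Z \<in> (\<lambda>(Y, W). meet S arr Y W) ` (supp f \<times> supp g)"
  proof (rule ccontr)
    assume "Z \<notin> (\<lambda>(Y, W). meet S arr Y W) ` (supp f \<times> supp g)"
    then have "\<And>Y W. Y \<in> supp f \<Longrightarrow> W \<in> supp g \<Longrightarrow> meet S arr Y W \<noteq> Z" by force
    then have "(f \<otimes>\<^bsub>alg S arr top1 X\<^esub> g) Z = 0"
      by (simp add: alg_mult_eq_sum[OF assms order_refl order_refl])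
    then show False using Z unfolding supp_def by simp
  qed
qed

lemma alg_mult_commute:
  assumes "finite (supp f)" "finite (supp g)"
  shows "f \<otimes>\<^bsub>alg S arr top1 X\<^esub> g = g \<otimes>\<^bsub>alg S arr top1 X\<^esub> f"
proof
  fix Z
  have "(f \<otimes>\<^bsub>alg S arr top1 X\<^esub> g) Z =
      (\<Sum>Y\<in>supp f. \<Sum>W\<in>supp g. if meet S arr Y W = Z then f Y * g W else 0)"
    by (rule alg_mult_eq_sum[OF assms order_refl order_refl])
  also have "\<dots> = (\<Sum>W\<in>supp g. \<Sum>Y\<in>supp f. if meet S arr W Y = Z then g W * f Y else 0)"
    by (subst sum.swap, intro sum.cong refl) (metis meet_commute mult.commute)
  also have "\<dots> = (g \<otimes>\<^bsub>alg S arr top1 X\<^esub> f) Z"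
    by (rule alg_mult_eq_sum[OF assms(2,1) order_refl order_refl, symmetric])
  finally show "(f \<otimes>\<^bsub>alg S arr top1 X\<^esub> g) Z = (g \<otimes>\<^bsub>alg S arr top1 X\<^esub> f) Z" .
qed

lemma alg_mult_add_distrib:
  assumes "finite (supp f)" "finite (supp g)" "finite (supp h)"
  shows "(f \<oplus>\<^bsub>alg S arr top1 X\<^esub> g) \<otimes>\<^bsub>alg S arr top1 X\<^esub> h =
    f \<otimes>\<^bsub>alg S arr top1 X\<^esub> h \<oplus>\<^bsub>alg S arr top1 X\<^esub> g \<otimes>\<^bsub>alg S arr top1 X\<^esub> h"
proof
  fix Z
  let ?A = "supp f \<union> supp g"
  have "supp f \<subseteq> ?A" "supp g \<subseteq> ?A" "supp (f \<oplus>\<^bsub>alg S arr top1 X\<^esub> g) \<subseteq> ?A"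
    by (auto simp: supp_def alg_add)
  then show "((f \<oplus>\<^bsub>alg S arr top1 X\<^esub> g) \<otimes>\<^bsub>alg S arr top1 X\<^esub> h) Z =
      (f \<otimes>\<^bsub>alg S arr top1 X\<^esub> h \<oplus>\<^bsub>alg S arr top1 X\<^esub> g \<otimes>\<^bsub>alg S arr top1 X\<^esub> h) Z"
    using assms
    by (simp add: alg_mult_eq_sum[where A = ?A and B = "supp h"] alg_add distrib_right
        if_distrib sum.distrib[symmetric] cong: if_cong)
qed

lemma sum_swap4:
  fixes t :: "_ \<Rightarrow> _ \<Rightarrow> _ \<Rightarrow> _ \<Rightarrow> 'b::comm_monoid_add"
  shows "(\<Sum>a\<in>A. \<Sum>b\<in>B. \<Sum>c\<in>C. \<Sum>d\<in>D. t a b c d) = (\<Sum>c\<in>C. \<Sum>d\<in>D. \<Sum>b\<in>B. \<Sum>a\<in>A. t a b c d)"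
  by (subst sum.swap, subst (2) sum.swap, subst sum.swap) (subst (3) sum.swap, simp add: sum.swap[of _ B])

lemma alg_mult_assoc_eq_sum:
  assumes fin: "finite (supp f)" "finite (supp g)" "finite (supp h)"
  shows "((f \<otimes>\<^bsub>alg S arr top1 X\<^esub> g) \<otimes>\<^bsub>alg S arr top1 X\<^esub> h) Z =
    (\<Sum>Y\<in>supp f. \<Sum>W\<in>supp g. \<Sum>V\<in>supp h.
      if meet S arr (meet S arr Y W) V = Z then f Y * g W * h V else 0)"
proof -
  let ?C = "(\<lambda>(Y, W). meet S arr Y W) ` (supp f \<times> supp g)"
  let ?t = "\<lambda>Y W V P. if meet S arr Y W = P \<and> meet S arr P V = Z then f Y * g W * h V else 0"
  have fC: "finite ?C" using fin by simp
  have "((f \<otimes>\<^bsub>alg S arr top1 X\<^esub> g) \<otimes>\<^bsub>alg S arr top1 X\<^esub> h) Z =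
      (\<Sum>P\<in>?C. \<Sum>V\<in>supp h. if meet S arr P V = Z then (f \<otimes>\<^bsub>alg S arr top1 X\<^esub> g) P * h V else 0)"
    by (rule alg_mult_eq_sum[OF fC fin(3) supp_alg_mult[OF fin(1,2)] order_refl])
  also have "\<dots> = (\<Sum>P\<in>?C. \<Sum>V\<in>supp h. \<Sum>Y\<in>supp f. \<Sum>W\<in>supp g. ?t Y W V P)"
    by (intro sum.cong refl)
      (simp add: alg_mult_eq_sum[OF fin(1,2) order_refl order_refl] sum_distrib_right
        if_distrib if_distribR conj_commute cong: if_cong)
  also have "\<dots> = (\<Sum>Y\<in>supp f. \<Sum>W\<in>supp g. \<Sum>V\<in>supp h. \<Sum>P\<in>?C. ?t Y W V P)"
    by (rule sum_swap4)
  also have "\<dots> = (\<Sum>Y\<in>supp f. \<Sum>W\<in>supp g. \<Sum>V\<in>supp h.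
      if meet S arr (meet S arr Y W) V = Z then f Y * g W * h V else 0)"
  proof (intro sum.cong refl)
    fix Y W V assume "Y \<in> supp f" "W \<in> supp g"
    then have "meet S arr Y W \<in> ?C" by force
    have "(\<Sum>P\<in>?C. ?t Y W V P) = (\<Sum>P\<in>?C. if meet S arr Y W = P
        then (if meet S arr (meet S arr Y W) V = Z then f Y * g W * h V else 0) else 0)"
      by (rule sum.cong) auto
    also have "\<dots> = (if meet S arr (meet S arr Y W) V = Z then f Y * g W * h V else 0)"
      using fC \<open>meet S arr Y W \<in> ?C\<close> by (simp only: sum.delta' if_True)
    finally show "(\<Sum>P\<in>?C. ?t Y W V P) =
        (if meet S arr (meet S arr Y W) V = Z then f Y * g W * h V else 0)" .
  qed
  finally show ?thesis .
qed

context information_structure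
begin

context
  fixes X :: 'a
  assumes X: "X \<in> S"
begin

lemma alg_one_mult:
  assumes "f \<in> carrier (alg S arr top1 X)"
  shows "\<one>\<^bsub>alg S arr top1 X\<^esub> \<otimes>\<^bsub>alg S arr top1 X\<^esub> f = f"
proof
  fix Z
  have f: "finite (supp f)" "supp f \<subseteq> S" using assms unfolding carrier_alg_iff SX_def by auto
  have "(\<one>\<^bsub>alg S arr top1 X\<^esub> \<otimes>\<^bsub>alg S arr top1 X\<^esub> f) Z =
      (\<Sum>W\<in>supp f. if meet S arr top1 W = Z then f W else 0)"
    using f by (subst alg_mult_eq_sum[where A = "{top1}" and B = "supp f"])
      (auto simp: alg_one supp_def cong: if_cong)
  also have "\<dots> = (\<Sum>W\<in>supp f. if W = Z then f W else 0)"
    using f(2) by (intro sum.cong refl) (auto simp: meet_top_left)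
  also have "\<dots> = f Z" using f(1) by (simp add: sum.delta' supp_def)
  finally show "(\<one>\<^bsub>alg S arr top1 X\<^esub> \<otimes>\<^bsub>alg S arr top1 X\<^esub> f) Z = f Z" .
qed

lemma alg_mult_closed:
  assumes "f \<in> carrier (alg S arr top1 X)" "g \<in> carrier (alg S arr top1 X)"
  shows "f \<otimes>\<^bsub>alg S arr top1 X\<^esub> g \<in> carrier (alg S arr top1 X)"
proof -
  have f: "finite (supp f)" "finite (supp g)" "supp f \<subseteq> SX S arr X" "supp g \<subseteq> SX S arr X"
    using assms unfolding carrier_alg_iff by auto
  have "(\<lambda>(Y, W). meet S arr Y W) ` (supp f \<times> supp g) \<subseteq> SX S arr X"
    using f(3,4) meet_in_SX[OF X] by auto
  then show ?thesis
    using supp_alg_mult[OF f(1,2)] f(1,2) unfolding carrier_alg_iff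
    by (meson finite_SigmaI finite_imageI finite_subset subset_trans)
qed

lemma alg_mult_assoc:
  assumes f: "f \<in> carrier (alg S arr top1 X)" and g: "g \<in> carrier (alg S arr top1 X)"
    and h: "h \<in> carrier (alg S arr top1 X)"
  shows "(f \<otimes>\<^bsub>alg S arr top1 X\<^esub> g) \<otimes>\<^bsub>alg S arr top1 X\<^esub> h =
    f \<otimes>\<^bsub>alg S arr top1 X\<^esub> (g \<otimes>\<^bsub>alg S arr top1 X\<^esub> h)"
proof
  fix Z
  have fin: "finite (supp f)" "finite (supp g)" "finite (supp h)"
    and sub: "supp f \<subseteq> SX S arr X" "supp g \<subseteq> SX S arr X" "supp h \<subseteq> SX S arr X"
    using f g h unfolding carrier_alg_iff by auto
  have gh: "finite (supp (g \<otimes>\<^bsub>alg S arr top1 X\<^esub> h))"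
    using alg_mult_closed[OF g h] unfolding carrier_alg_iff by simp
  have "(f \<otimes>\<^bsub>alg S arr top1 X\<^esub> (g \<otimes>\<^bsub>alg S arr top1 X\<^esub> h)) Z =
      ((g \<otimes>\<^bsub>alg S arr top1 X\<^esub> h) \<otimes>\<^bsub>alg S arr top1 X\<^esub> f) Z"
    by (simp add: alg_mult_commute[OF fin(1) gh])
  also have "\<dots> = (\<Sum>W\<in>supp g. \<Sum>V\<in>supp h. \<Sum>Y\<in>supp f.
      if meet S arr (meet S arr W V) Y = Z then g W * h V * f Y else 0)"
    by (rule alg_mult_assoc_eq_sum[OF fin(2,3,1)])
  also have "\<dots> = (\<Sum>W\<in>supp g. \<Sum>V\<in>supp h. \<Sum>Y\<in>supp f.
      if meet S arr (meet S arr Y W) V = Z then f Y * g W * h V else 0)"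
  proof (intro sum.cong refl)
    fix W V Y assume "W \<in> supp g" "V \<in> supp h" "Y \<in> supp f"
    then have "meet S arr (meet S arr W V) Y = meet S arr (meet S arr Y W) V"
      using meet_assoc[OF X] sub meet_commute by (metis subsetD)
    then show "(if meet S arr (meet S arr W V) Y = Z then g W * h V * f Y else 0) =
        (if meet S arr (meet S arr Y W) V = Z then f Y * g W * h V else 0)"
      by simp
  qed
  also have "\<dots> = (\<Sum>Y\<in>supp f. \<Sum>W\<in>supp g. \<Sum>V\<in>supp h.
      if meet S arr (meet S arr Y W) V = Z then f Y * g W * h V else 0)"
    by (subst sum.swap, rule sum.cong[OF refl], rule sum.swap)
  also have "\<dots> = ((f \<otimes>\<^bsub>alg S arr top1 X\<^esub> g) \<otimes>\<^bsub>alg S arr top1 X\<^esub> h) Z"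
    by (rule alg_mult_assoc_eq_sum[OF fin, symmetric])
  finally show "((f \<otimes>\<^bsub>alg S arr top1 X\<^esub> g) \<otimes>\<^bsub>alg S arr top1 X\<^esub> h) Z =
      (f \<otimes>\<^bsub>alg S arr top1 X\<^esub> (g \<otimes>\<^bsub>alg S arr top1 X\<^esub> h)) Z" ..
qed

lemma alg_cring: "cring (alg S arr top1 X)"
proof (rule cringI)
  have neg: "(\<lambda>Y. - f Y) \<in> carrier (alg S arr top1 X)" if "f \<in> carrier (alg S arr top1 X)" for f
    using that by (simp add: carrier_alg_iff supp_def)
  have add: "f \<oplus>\<^bsub>alg S arr top1 X\<^esub> g \<in> carrier (alg S arr top1 X)"
    if "f \<in> carrier (alg S arr top1 X)" "g \<in> carrier (alg S arr top1 X)" for f g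
  proof -
    have "supp (f \<oplus>\<^bsub>alg S arr top1 X\<^esub> g) \<subseteq> supp f \<union> supp g" by (auto simp: supp_def alg_add)
    then show ?thesis using that unfolding carrier_alg_iff by (meson finite_Un finite_subset le_sup_iff order_trans)
  qed
  show "abelian_group (alg S arr top1 X)"
  proof (rule abelian_groupI)
    show "f \<oplus>\<^bsub>alg S arr top1 X\<^esub> g \<in> carrier (alg S arr top1 X)"
      if "f \<in> carrier (alg S arr top1 X)" "g \<in> carrier (alg S arr top1 X)" for f g
      using that by (rule add)
    show "\<exists>g\<in>carrier (alg S arr top1 X). g \<oplus>\<^bsub>alg S arr top1 X\<^esub> f = \<zero>\<^bsub>alg S arr top1 X\<^esub>"
      if "f \<in> carrier (alg S arr top1 X)" for f
      using neg[OF that] by (intro bexI) (auto simp: alg_add alg_zero)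
  qed (auto simp: alg_add alg_zero carrier_alg_iff supp_def)
  have one: "\<one>\<^bsub>alg S arr top1 X\<^esub> \<in> carrier (alg S arr top1 X)"
    using top_in_SX[OF X] by (simp add: carrier_alg_iff alg_one supp_def)
  have commute: "f \<otimes>\<^bsub>alg S arr top1 X\<^esub> g = g \<otimes>\<^bsub>alg S arr top1 X\<^esub> f"
    if "f \<in> carrier (alg S arr top1 X)" "g \<in> carrier (alg S arr top1 X)" for f g
    using that unfolding carrier_alg_iff by (blast intro: alg_mult_commute)
  show "comm_monoid (alg S arr top1 X)"
    by (rule comm_monoidI) (auto intro: alg_mult_closed alg_mult_assoc alg_one_mult commute one)
  show "(f \<oplus>\<^bsub>alg S arr top1 X\<^esub> g) \<otimes>\<^bsub>alg S arr top1 X\<^esub> h =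
      f \<otimes>\<^bsub>alg S arr top1 X\<^esub> h \<oplus>\<^bsub>alg S arr top1 X\<^esub> g \<otimes>\<^bsub>alg S arr top1 X\<^esub> h"
    if "f \<in> carrier (alg S arr top1 X)" "g \<in> carrier (alg S arr top1 X)" "h \<in> carrier (alg S arr top1 X)"
    for f g h
    using that by (simp add: carrier_alg_iff alg_mult_add_distrib)
qed

end

end

section \<open>The presheaf B_n\<close>

lemma Bmod_add: "m \<oplus>\<^bsub>Bmod S arr top1 n X\<^esub> m' = (\<lambda>s. m s \<oplus>\<^bsub>alg S arr top1 X\<^esub> m' s)"
  and Bmod_zero: "\<zero>\<^bsub>Bmod S arr top1 n X\<^esub> = (\<lambda>s. \<zero>\<^bsub>alg S arr top1 X\<^esub>)"
  and Bmod_smult: "a \<odot>\<^bsub>Bmod S arr top1 n X\<^esub> m = (\<lambda>s. a \<otimes>\<^bsub>alg S arr top1 X\<^esub> m s)"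
  by (simp_all add: Bmod_def alg_def)

lemma Bmod_carrier_iff:
  "m \<in> carrier (Bmod S arr top1 n X) \<longleftrightarrow>
    finite {s. m s \<noteq> \<zero>\<^bsub>alg S arr top1 X\<^esub>} \<and> (\<forall>s. m s \<in> carrier (alg S arr top1 X)) \<and>
    (\<forall>s. m s \<noteq> \<zero>\<^bsub>alg S arr top1 X\<^esub> \<longrightarrow> s \<in> Bsym S arr n X)"
  by (simp add: Bmod_def alg_def)

lemma Bmod_carrierD:
  assumes "m \<in> carrier (Bmod S arr top1 n X)"
  shows "finite {s. m s \<noteq> (\<lambda>Y. 0)}" "{s. m s \<noteq> (\<lambda>Y. 0)} \<subseteq> Bsym S arr n X"
    "m s \<in> carrier (alg S arr top1 X)"
  using assms unfolding Bmod_carrier_iff alg_zero by auto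

definition Bgen :: "'a \<Rightarrow> 'a list \<Rightarrow> 'a list \<Rightarrow> 'a \<Rightarrow> real" where
  "Bgen top1 s = (\<lambda>t. if t = s then (\<lambda>Y. if Y = top1 then 1 else 0) else (\<lambda>Y. 0))"

definition meet_list :: "'a set \<Rightarrow> ('a \<Rightarrow> 'a \<Rightarrow> bool) \<Rightarrow> 'a \<Rightarrow> 'a list \<Rightarrow> 'a" where
  "meet_list S arr top1 xs = foldr (meet S arr) xs top1"

context information_structure
begin

lemma Bsym_mono: "\<lbrakk>X \<in> S; Y \<in> S; arr X Y\<rbrakk> \<Longrightarrow> Bsym S arr n Y \<subseteq> Bsym S arr n X"
  using SX_mono by (auto simp: Bsym_def)

lemma Bmod_carrier_mono:
  assumes "X \<in> S" "Y \<in> S" "arr X Y"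
  shows "carrier (Bmod S arr top1 n Y) \<subseteq> carrier (Bmod S arr top1 n X)"
proof -
  have "carrier (alg S arr top1 Y) \<subseteq> carrier (alg S arr top1 X)"
    using SX_mono[OF assms] by (auto simp: alg_def)
  then show ?thesis
    using Bsym_mono[OF assms, of n] by (intro subsetI) (simp add: Bmod_carrier_iff alg_zero, blast)
qed

lemma meet_list_lower:
  assumes "X \<in> S" "set xs \<subseteq> SX S arr X"
  shows "meet_list S arr top1 xs \<in> SX S arr X \<and> (\<forall>x\<in>set xs. arr (meet_list S arr top1 xs) x)"
  using assms(2)
proof (induction xs)
  case Nil
  then show ?case using top_in_SX[OF assms(1)] by (simp add: meet_list_def)
next
  case (Cons x xs)
  let ?M = "meet_list S arr top1 xs"
  have x: "x \<in> SX S arr X" and IH: "?M \<in> SX S arr X" "\<forall>y\<in>set xs. arr ?M y"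
    using Cons by auto
  have "meet_list S arr top1 (x # xs) = meet S arr x ?M" by (simp add: meet_list_def)
  moreover have "arr (meet S arr x ?M) y" if "y \<in> set xs" for y
  proof (rule arr_trans)
    show "y \<in> S" "?M \<in> S" "meet S arr x ?M \<in> S"
      using that Cons.prems IH(1) meet_in_SX[OF assms(1) x IH(1)] unfolding SX_def by auto
  qed (use that IH(2) meet_lower2[OF assms(1) x IH(1)] in auto)
  ultimately show ?case using meet_in_SX[OF assms(1) x IH(1)] meet_lower1[OF assms(1) x IH(1)] by simp
qed

lemma Bsym_meet_list:
  assumes "X \<in> S" "s \<in> Bsym S arr n X"
  shows "meet_list S arr top1 s \<in> S" "arr X (meet_list S arr top1 s)"
    "s \<in> Bsym S arr n (meet_list S arr top1 s)"
proof -
  have s: "set s \<subseteq> SX S arr X" "length s = n" using assms(2) unfolding Bsym_def by auto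
  with meet_list_lower[OF assms(1) s(1)] show "meet_list S arr top1 s \<in> S" "arr X (meet_list S arr top1 s)"
    "s \<in> Bsym S arr n (meet_list S arr top1 s)"
    unfolding Bsym_def SX_def by auto
qed

context
  fixes X :: 'a
  assumes X: "X \<in> S"
begin

lemma Bmod_module: "module (alg S arr top1 X) (Bmod S arr top1 n X)"
proof -
  interpret R: cring "alg S arr top1 X" by (rule alg_cring[OF X])
  let ?R = "alg S arr top1 X" and ?M = "Bmod S arr top1 n X"
  have closed: "(\<lambda>s. h (x s)) \<in> carrier ?M"
    if "x \<in> carrier ?M" "\<And>a. a \<in> carrier ?R \<Longrightarrow> h a \<in> carrier ?R" "h \<zero>\<^bsub>?R\<^esub> = \<zero>\<^bsub>?R\<^esub>" for x h
  proof -
    have "{s. h (x s) \<noteq> \<zero>\<^bsub>?R\<^esub>} \<subseteq> {s. x s \<noteq> \<zero>\<^bsub>?R\<^esub>}" using that(3) by auto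
    with that(1,2) show ?thesis unfolding Bmod_carrier_iff by (meson finite_subset subsetD mem_Collect_eq)
  qed
  show ?thesis
  proof (rule moduleI)
    show "abelian_group ?M"
    proof (rule abelian_groupI)
      show "x \<oplus>\<^bsub>?M\<^esub> y \<in> carrier ?M" if "x \<in> carrier ?M" "y \<in> carrier ?M" for x y
      proof -
        have "{s. x s \<oplus>\<^bsub>?R\<^esub> y s \<noteq> \<zero>\<^bsub>?R\<^esub>} \<subseteq> {s. x s \<noteq> \<zero>\<^bsub>?R\<^esub>} \<union> {s. y s \<noteq> \<zero>\<^bsub>?R\<^esub>}"
          using that by (auto simp: Bmod_carrier_iff)
        then show ?thesis
          using that unfolding Bmod_carrier_iff Bmod_add by (blast intro: finite_subset)
      qed
      show "\<exists>y\<in>carrier ?M. y \<oplus>\<^bsub>?M\<^esub> x = \<zero>\<^bsub>?M\<^esub>" if "x \<in> carrier ?M" for x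
        using that closed[OF that, of "\<lambda>a. \<ominus>\<^bsub>?R\<^esub> a"]
        by (intro bexI[of _ "\<lambda>s. \<ominus>\<^bsub>?R\<^esub> x s"]) (auto simp: Bmod_add Bmod_zero Bmod_carrier_iff R.l_neg)
      show "x \<oplus>\<^bsub>?M\<^esub> y \<oplus>\<^bsub>?M\<^esub> z = x \<oplus>\<^bsub>?M\<^esub> (y \<oplus>\<^bsub>?M\<^esub> z)"
        if "x \<in> carrier ?M" "y \<in> carrier ?M" "z \<in> carrier ?M" for x y z
        using that by (simp add: Bmod_add Bmod_carrier_iff R.a_assoc)
      show "x \<oplus>\<^bsub>?M\<^esub> y = y \<oplus>\<^bsub>?M\<^esub> x" if "x \<in> carrier ?M" "y \<in> carrier ?M" for x y
        using that by (simp add: Bmod_add Bmod_carrier_iff R.a_comm)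
    qed (simp_all add: Bmod_add Bmod_zero Bmod_carrier_iff)
    show "a \<odot>\<^bsub>?M\<^esub> x \<in> carrier ?M" if "a \<in> carrier ?R" "x \<in> carrier ?M" for a x
      using closed[OF that(2), of "\<lambda>b. a \<otimes>\<^bsub>?R\<^esub> b"] that by (simp add: Bmod_smult)
  qed (simp_all add: Bmod_add Bmod_smult Bmod_carrier_iff R.cring_axioms R.l_distr R.r_distr R.m_assoc)
qed

lemma Bgen_carrier:
  assumes "s \<in> Bsym S arr n X"
  shows "Bgen top1 s \<in> carrier (Bmod S arr top1 n X)"
proof -
  have "\<one>\<^bsub>alg S arr top1 X\<^esub> \<in> carrier (alg S arr top1 X)" "\<zero>\<^bsub>alg S arr top1 X\<^esub> \<in> carrier (alg S arr top1 X)"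
    using cring.axioms(1)[OF alg_cring[OF X]] by (simp_all add: ring.ring_simprules)
  moreover have "{t. Bgen top1 s t \<noteq> \<zero>\<^bsub>alg S arr top1 X\<^esub>} \<subseteq> {s}"
    by (auto simp: Bgen_def alg_zero)
  ultimately show ?thesis
    using assms unfolding Bmod_carrier_iff
    by (auto simp: Bgen_def alg_zero alg_one intro: finite_subset)
qed

lemma Bmod_finsum:
  assumes "finite T" "h \<in> T \<rightarrow> carrier (Bmod S arr top1 n X)"
  shows "finsum (Bmod S arr top1 n X) h T = (\<lambda>t Y. \<Sum>s\<in>T. h s t Y)"
  using assms
proof (induction T rule: finite_induct)
  case empty
  interpret M: module "alg S arr top1 X" "Bmod S arr top1 n X" by (rule Bmod_module)
  show ?case by (simp add: Bmod_zero alg_zero)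
next
  case (insert a T)
  interpret M: module "alg S arr top1 X" "Bmod S arr top1 n X" by (rule Bmod_module)
  have "finsum (Bmod S arr top1 n X) h (insert a T) =
      h a \<oplus>\<^bsub>Bmod S arr top1 n X\<^esub> finsum (Bmod S arr top1 n X) h T"
    using insert.prems by (intro M.finsum_insert[OF insert.hyps]) auto
  then show ?case using insert by (simp add: Bmod_add alg_add)
qed

lemma Bmod_basis_expansion:
  assumes m: "m \<in> carrier (Bmod S arr top1 n X)"
  shows "(\<Oplus>\<^bsub>Bmod S arr top1 n X\<^esub>s\<in>{s. m s \<noteq> (\<lambda>Y. 0)}. m s \<odot>\<^bsub>Bmod S arr top1 n X\<^esub> Bgen top1 s) = m"
proof -
  let ?T = "{s. m s \<noteq> (\<lambda>Y. 0)}"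
  interpret R: cring "alg S arr top1 X" by (rule alg_cring[OF X])
  note T = Bmod_carrierD(1,2)[OF m] and coeff = Bmod_carrierD(3)[OF m]
  have term_eq: "(m s \<odot>\<^bsub>Bmod S arr top1 n X\<^esub> Bgen top1 s) t = (if t = s then m s else (\<lambda>Y. 0))" for s t
    using R.r_one[OF coeff] R.r_null[OF coeff]
    by (simp add: Bmod_smult Bgen_def alg_one alg_zero)
  have terms: "(\<lambda>s. m s \<odot>\<^bsub>Bmod S arr top1 n X\<^esub> Bgen top1 s) \<in> ?T \<rightarrow> carrier (Bmod S arr top1 n X)"
    using Bgen_carrier T(2) coeff module.smult_closed[OF Bmod_module] by blast
  have "(\<Oplus>\<^bsub>Bmod S arr top1 n X\<^esub>s\<in>?T. m s \<odot>\<^bsub>Bmod S arr top1 n X\<^esub> Bgen top1 s) =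
      (\<lambda>t Y. \<Sum>s\<in>?T. if t = s then m s Y else 0)"
    by (simp only: Bmod_finsum[OF T(1) terms]) (simp add: term_eq if_distrib[of "\<lambda>f. f _"] cong: if_cong)
  also have "\<dots> = m"
    using T(1) by (auto simp: sum.delta intro!: ext)
  finally show ?thesis .
qed

end

lemma Bmod_presheaf: "presheaf_mod S arr top1 (Bmod S arr top1 n) Bres"
  unfolding presheaf_mod_def
proof (intro conjI ballI impI)
  fix X Y assume XY: "X \<in> S" "Y \<in> S" "arr X Y"
  show "Bres X Y \<in> carrier (Bmod S arr top1 n Y) \<rightarrow> carrier (Bmod S arr top1 n X)"
    using Bmod_carrier_mono[OF XY, of n] unfolding Bres_def by blast
  show "Bres X Y (a \<odot>\<^bsub>Bmod S arr top1 n Y\<^esub> x) = a \<odot>\<^bsub>Bmod S arr top1 n X\<^esub> Bres X Y x" for a x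
    by (simp add: Bres_def Bmod_smult alg_mult_indep[where X = Y and Y = X])
  show "Bres X Y (x \<oplus>\<^bsub>Bmod S arr top1 n Y\<^esub> y) = Bres X Y x \<oplus>\<^bsub>Bmod S arr top1 n X\<^esub> Bres X Y y" for x y
    by (simp add: Bres_def Bmod_add alg_add)
qed (auto simp: Bres_def intro: Bmod_module)

end

section \<open>Lifting morphisms out of B_n\<close>

lemma hom_finsum:
  assumes M: "abelian_group M" and N: "abelian_group N" and h: "h \<in> carrier M \<rightarrow> carrier N"
    and add: "\<And>x y. \<lbrakk>x \<in> carrier M; y \<in> carrier M\<rbrakk> \<Longrightarrow> h (x \<oplus>\<^bsub>M\<^esub> y) = h x \<oplus>\<^bsub>N\<^esub> h y"
    and fin: "finite A" and u: "u \<in> A \<rightarrow> carrier M"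
  shows "h (finsum M u A) = finsum N (\<lambda>a. h (u a)) A"
  using fin u
proof (induction A rule: finite_induct)
  case empty
  interpret M: abelian_group M by (rule M)
  interpret N: abelian_group N by (rule N)
  have "h \<zero>\<^bsub>M\<^esub> \<oplus>\<^bsub>N\<^esub> h \<zero>\<^bsub>M\<^esub> = h \<zero>\<^bsub>M\<^esub>" using add[of "\<zero>\<^bsub>M\<^esub>" "\<zero>\<^bsub>M\<^esub>"] by simp
  then show ?case using h by (simp add: N.add.r_cancel_one' Pi_iff)
next
  case (insert a A)
  interpret M: abelian_group M by (rule M)
  interpret N: abelian_group N by (rule N)
  have ua: "u a \<in> carrier M" and uA: "u \<in> A \<rightarrow> carrier M" using insert.prems by auto
  have "h (finsum M u (insert a A)) = h (u a) \<oplus>\<^bsub>N\<^esub> h (finsum M u A)"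
    using insert.hyps ua uA by (simp add: M.finsum_insert add M.finsum_closed)
  also have "\<dots> = h (u a) \<oplus>\<^bsub>N\<^esub> finsum N (\<lambda>a. h (u a)) A"
    by (simp add: insert.IH[OF uA])
  also have "\<dots> = finsum N (\<lambda>a. h (u a)) (insert a A)"
    by (rule N.finsum_insert[symmetric, OF insert.hyps]) (use ua uA h in auto)
  finally show ?case .
qed

lemma presheaf_modD:
  assumes "presheaf_mod S arr top1 F res"
  shows presheaf_mod_module: "X \<in> S \<Longrightarrow> module (alg S arr top1 X) (F X)"
    and presheaf_mod_res_closed:
      "\<lbrakk>X \<in> S; Y \<in> S; arr X Y\<rbrakk> \<Longrightarrow> res X Y \<in> carrier (F Y) \<rightarrow> carrier (F X)"
    and presheaf_mod_res_add: "\<lbrakk>X \<in> S; Y \<in> S; arr X Y; x \<in> carrier (F Y); y \<in> carrier (F Y)\<rbrakk>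
      \<Longrightarrow> res X Y (x \<oplus>\<^bsub>F Y\<^esub> y) = res X Y x \<oplus>\<^bsub>F X\<^esub> res X Y y"
    and presheaf_mod_res_smult: "\<lbrakk>X \<in> S; Y \<in> S; arr X Y; a \<in> carrier (alg S arr top1 Y); x \<in> carrier (F Y)\<rbrakk>
      \<Longrightarrow> res X Y (a \<odot>\<^bsub>F Y\<^esub> x) = a \<odot>\<^bsub>F X\<^esub> res X Y x"
    and presheaf_mod_res_comp: "\<lbrakk>X \<in> S; Y \<in> S; Z \<in> S; arr X Y; arr Y Z; x \<in> carrier (F Z)\<rbrakk>
      \<Longrightarrow> res X Y (res Y Z x) = res X Z x"
  using assms unfolding presheaf_mod_def by blast+

lemma presheaf_mod_homD:
  assumes "presheaf_mod_hom S arr top1 F resF G resG \<phi>"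
  shows presheaf_mod_hom_closed: "X \<in> S \<Longrightarrow> \<phi> X \<in> carrier (F X) \<rightarrow> carrier (G X)"
    and presheaf_mod_hom_add: "\<lbrakk>X \<in> S; x \<in> carrier (F X); y \<in> carrier (F X)\<rbrakk>
      \<Longrightarrow> \<phi> X (x \<oplus>\<^bsub>F X\<^esub> y) = \<phi> X x \<oplus>\<^bsub>G X\<^esub> \<phi> X y"
    and presheaf_mod_hom_smult: "\<lbrakk>X \<in> S; a \<in> carrier (alg S arr top1 X); x \<in> carrier (F X)\<rbrakk>
      \<Longrightarrow> \<phi> X (a \<odot>\<^bsub>F X\<^esub> x) = a \<odot>\<^bsub>G X\<^esub> \<phi> X x"
    and presheaf_mod_hom_natural: "\<lbrakk>X \<in> S; Y \<in> S; arr X Y; x \<in> carrier (F Y)\<rbrakk>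
      \<Longrightarrow> \<phi> X (resF X Y x) = resG X Y (\<phi> Y x)"
  using assms unfolding presheaf_mod_hom_def by blast+

locale Bn_lifting = information_structure S arr top1
  for S :: "'a set" and arr :: "'a \<Rightarrow> 'a \<Rightarrow> bool" and top1 :: 'a +
  fixes n :: nat
    and F :: "'a \<Rightarrow> ('a \<Rightarrow> real, 'm) module" and resF :: "'a \<Rightarrow> 'a \<Rightarrow> 'm \<Rightarrow> 'm"
    and G :: "'a \<Rightarrow> ('a \<Rightarrow> real, 'n) module" and resG :: "'a \<Rightarrow> 'a \<Rightarrow> 'n \<Rightarrow> 'n"
    and e :: "'a \<Rightarrow> 'm \<Rightarrow> 'n" and f :: "'a \<Rightarrow> ('a list \<Rightarrow> 'a \<Rightarrow> real) \<Rightarrow> 'n"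
  assumes F: "presheaf_mod S arr top1 F resF" and G: "presheaf_mod S arr top1 G resG"
    and e: "presheaf_mod_epi S arr top1 F resF G resG e"
    and f: "presheaf_mod_hom S arr top1 (Bmod S arr top1 n) Bres G resG f"
begin

abbreviation "A \<equiv> alg S arr top1"
abbreviation "Bn \<equiv> Bmod S arr top1 n"
abbreviation "M \<equiv> meet_list S arr top1"

lemma e_hom: "presheaf_mod_hom S arr top1 F resF G resG e"
  and e_surj: "X \<in> S \<Longrightarrow> e X ` carrier (F X) = carrier (G X)"
  using e unfolding presheaf_mod_epi_def by blast+

definition gen_lift :: "'a list \<Rightarrow> 'm" where
  "gen_lift s = (SOME v. v \<in> carrier (F (M s)) \<and> e (M s) v = f (M s) (Bgen top1 s))"

definition lift :: "'a \<Rightarrow> ('a list \<Rightarrow> 'a \<Rightarrow> real) \<Rightarrow> 'm" where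
  "lift X m = (\<Oplus>\<^bsub>F X\<^esub>s\<in>{s. m s \<noteq> (\<lambda>Y. 0)}. m s \<odot>\<^bsub>F X\<^esub> resF X (M s) (gen_lift s))"

lemma gen_lift:
  assumes "X \<in> S" "s \<in> Bsym S arr n X"
  shows "gen_lift s \<in> carrier (F (M s))" "e (M s) (gen_lift s) = f (M s) (Bgen top1 s)"
proof -
  note Ms = Bsym_meet_list[OF assms]
  have "f (M s) (Bgen top1 s) \<in> carrier (G (M s))"
    using presheaf_mod_hom_closed[OF f Ms(1)] Bgen_carrier[OF Ms(1,3)] by blast
  then have "\<exists>v. v \<in> carrier (F (M s)) \<and> e (M s) v = f (M s) (Bgen top1 s)"
    using e_surj[OF Ms(1)] by (metis imageE)
  then show "gen_lift s \<in> carrier (F (M s))" "e (M s) (gen_lift s) = f (M s) (Bgen top1 s)"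
    unfolding gen_lift_def by (metis (mono_tags, lifting) someI_ex)+
qed

lemma res_gen_lift_closed:
  assumes "X \<in> S" "s \<in> Bsym S arr n X"
  shows "resF X (M s) (gen_lift s) \<in> carrier (F X)"
  using presheaf_mod_res_closed[OF F assms(1) Bsym_meet_list(1,2)[OF assms]] gen_lift(1)[OF assms]
  by blast

lemma lift_term_closed:
  assumes "X \<in> S" "m \<in> carrier (Bn X)" "s \<in> Bsym S arr n X"
  shows "m s \<odot>\<^bsub>F X\<^esub> resF X (M s) (gen_lift s) \<in> carrier (F X)"
  using module.smult_closed[OF presheaf_mod_module[OF F assms(1)] Bmod_carrierD(3)[OF assms(2)]
      res_gen_lift_closed[OF assms(1,3)]] .

lemma lift_terms_closed:
  assumes "X \<in> S" "m \<in> carrier (Bn X)" "T \<subseteq> Bsym S arr n X"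
  shows "(\<lambda>s. m s \<odot>\<^bsub>F X\<^esub> resF X (M s) (gen_lift s)) \<in> T \<rightarrow> carrier (F X)"
  using lift_term_closed[OF assms(1,2)] assms(3) by blast

lemma lift_eq_finsum_superset:
  assumes X: "X \<in> S" and m: "m \<in> carrier (Bn X)"
    and T: "finite T" "{s. m s \<noteq> (\<lambda>Y. 0)} \<subseteq> T" "T \<subseteq> Bsym S arr n X"
  shows "lift X m = (\<Oplus>\<^bsub>F X\<^esub>s\<in>T. m s \<odot>\<^bsub>F X\<^esub> resF X (M s) (gen_lift s))"
proof -
  interpret FX: module "A X" "F X" by (rule presheaf_mod_module[OF F X])
  have "m s \<odot>\<^bsub>F X\<^esub> resF X (M s) (gen_lift s) = \<zero>\<^bsub>F X\<^esub>" if "s \<in> T - {s. m s \<noteq> (\<lambda>Y. 0)}" for s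
    using that T(3) FX.smult_l_null[OF res_gen_lift_closed[OF X]] by (auto simp: alg_zero)
  then show ?thesis
    unfolding lift_def using T lift_terms_closed[OF X m T(3)]
    by (intro FX.add.finprod_mono_neutral_cong_left) auto
qed

lemma lift_closed:
  assumes "X \<in> S" "m \<in> carrier (Bn X)"
  shows "lift X m \<in> carrier (F X)"
proof -
  interpret FX: module "A X" "F X" by (rule presheaf_mod_module[OF F assms(1)])
  show ?thesis
    unfolding lift_def by (rule FX.finsum_closed[OF lift_terms_closed[OF assms Bmod_carrierD(2)[OF assms(2)]]])
qed

lemma lift_add:
  assumes X: "X \<in> S" and x: "x \<in> carrier (Bn X)" and y: "y \<in> carrier (Bn X)"
  shows "lift X (x \<oplus>\<^bsub>Bn X\<^esub> y) = lift X x \<oplus>\<^bsub>F X\<^esub> lift X y"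
proof -
  interpret FX: module "A X" "F X" by (rule presheaf_mod_module[OF F X])
  interpret BX: module "A X" "Bn X" by (rule Bmod_module[OF X])
  let ?T = "{s. x s \<noteq> (\<lambda>Y. 0)} \<union> {s. y s \<noteq> (\<lambda>Y. 0)}"
  let ?v = "\<lambda>s. resF X (M s) (gen_lift s)"
  have T: "finite ?T" "?T \<subseteq> Bsym S arr n X" using Bmod_carrierD[OF x] Bmod_carrierD[OF y] by auto
  have "lift X (x \<oplus>\<^bsub>Bn X\<^esub> y) = (\<Oplus>\<^bsub>F X\<^esub>s\<in>?T. (x \<oplus>\<^bsub>Bn X\<^esub> y) s \<odot>\<^bsub>F X\<^esub> ?v s)"
    using T by (intro lift_eq_finsum_superset[OF X BX.add.m_closed[OF x y]]) (auto simp: Bmod_add alg_add)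
  also have "\<dots> = (\<Oplus>\<^bsub>F X\<^esub>s\<in>?T. x s \<odot>\<^bsub>F X\<^esub> ?v s \<oplus>\<^bsub>F X\<^esub> y s \<odot>\<^bsub>F X\<^esub> ?v s)"
    using T(2) Bmod_carrierD(3)[OF x] Bmod_carrierD(3)[OF y] res_gen_lift_closed[OF X] lift_term_closed[OF X]
    by (intro FX.finsum_cong') (auto simp: Bmod_add FX.smult_l_distr)
  also have "\<dots> = lift X x \<oplus>\<^bsub>F X\<^esub> lift X y"
    using T lift_term_closed[OF X] x y
    by (simp add: FX.finsum_addf lift_eq_finsum_superset[OF X, of _ ?T] subset_iff Pi_iff)
  finally show ?thesis .
qed

lemma lift_smult:
  assumes X: "X \<in> S" and a: "a \<in> carrier (A X)" and x: "x \<in> carrier (Bn X)"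
  shows "lift X (a \<odot>\<^bsub>Bn X\<^esub> x) = a \<odot>\<^bsub>F X\<^esub> lift X x"
proof -
  interpret FX: module "A X" "F X" by (rule presheaf_mod_module[OF F X])
  interpret BX: module "A X" "Bn X" by (rule Bmod_module[OF X])
  let ?T = "{s. x s \<noteq> (\<lambda>Y. 0)}"
  let ?v = "\<lambda>s. resF X (M s) (gen_lift s)"
  note T = Bmod_carrierD(1,2)[OF x]
  have "{s. (a \<odot>\<^bsub>Bn X\<^esub> x) s \<noteq> (\<lambda>Y. 0)} \<subseteq> ?T"
    using FX.r_null[OF a] by (auto simp: Bmod_smult alg_zero)
  then have "lift X (a \<odot>\<^bsub>Bn X\<^esub> x) = (\<Oplus>\<^bsub>F X\<^esub>s\<in>?T. (a \<odot>\<^bsub>Bn X\<^esub> x) s \<odot>\<^bsub>F X\<^esub> ?v s)"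
    by (rule lift_eq_finsum_superset[OF X BX.smult_closed[OF a x] T(1) _ T(2)])
  also have "\<dots> = (\<Oplus>\<^bsub>F X\<^esub>s\<in>?T. a \<odot>\<^bsub>F X\<^esub> (x s \<odot>\<^bsub>F X\<^esub> ?v s))"
    using T(2) a Bmod_carrierD(3)[OF x] res_gen_lift_closed[OF X] lift_term_closed[OF X x]
    by (intro FX.finsum_cong') (auto simp: Bmod_smult FX.smult_assoc1)
  also have "\<dots> = a \<odot>\<^bsub>F X\<^esub> lift X x"
    using T a lift_term_closed[OF X x] unfolding lift_def
    by (intro FX.finsum_smult_ldistr[symmetric]) auto
  finally show ?thesis .
qed

lemma lift_natural:
  assumes X: "X \<in> S" and Y: "Y \<in> S" and XY: "arr X Y" and x: "x \<in> carrier (Bn Y)"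
  shows "lift X (Bres X Y x) = resF X Y (lift Y x)"
proof -
  interpret FX: module "A X" "F X" by (rule presheaf_mod_module[OF F X])
  interpret FY: module "A Y" "F Y" by (rule presheaf_mod_module[OF F Y])
  let ?T = "{s. x s \<noteq> (\<lambda>Y. 0)}"
  note T = Bmod_carrierD(1,2)[OF x]
  have "resF X Y (lift Y x) = (\<Oplus>\<^bsub>F X\<^esub>s\<in>?T. resF X Y (x s \<odot>\<^bsub>F Y\<^esub> resF Y (M s) (gen_lift s)))"
    unfolding lift_def
    by (intro hom_finsum[OF FY.abelian_group_axioms FX.abelian_group_axioms
          presheaf_mod_res_closed[OF F X Y XY] presheaf_mod_res_add[OF F X Y XY] T(1)
          lift_terms_closed[OF Y x T(2)]])
  also have "\<dots> = (\<Oplus>\<^bsub>F X\<^esub>s\<in>?T. x s \<odot>\<^bsub>F X\<^esub> resF X (M s) (gen_lift s))"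
  proof (intro FX.finsum_cong')
    fix s assume "s \<in> ?T"
    then have s: "s \<in> Bsym S arr n Y" using T(2) by blast
    note Ms = Bsym_meet_list[OF Y s]
    show "resF X Y (x s \<odot>\<^bsub>F Y\<^esub> resF Y (M s) (gen_lift s)) = x s \<odot>\<^bsub>F X\<^esub> resF X (M s) (gen_lift s)"
      using presheaf_mod_res_smult[OF F X Y XY Bmod_carrierD(3)[OF x] res_gen_lift_closed[OF Y s]]
        presheaf_mod_res_comp[OF F X Y Ms(1) XY Ms(2) gen_lift(1)[OF Y s]] by simp
  next
    show "(\<lambda>s. x s \<odot>\<^bsub>F X\<^esub> resF X (M s) (gen_lift s)) \<in> ?T \<rightarrow> carrier (F X)"
      using lift_terms_closed[OF X subsetD[OF Bmod_carrier_mono[OF X Y XY] x]] T(2)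
        Bsym_mono[OF X Y XY] by blast
  qed simp
  also have "\<dots> = lift X (Bres X Y x)" unfolding lift_def Bres_def ..
  finally show ?thesis ..
qed

lemma lift_hom: "presheaf_mod_hom S arr top1 Bn Bres F resF lift"
  unfolding presheaf_mod_hom_def
  using lift_closed lift_add lift_smult lift_natural by (intro conjI ballI impI Pi_I) auto

lemma lift_lifts:
  assumes X: "X \<in> S" and x: "x \<in> carrier (Bn X)"
  shows "e X (lift X x) = f X x"
proof -
  interpret FX: module "A X" "F X" by (rule presheaf_mod_module[OF F X])
  interpret GX: module "A X" "G X" by (rule presheaf_mod_module[OF G X])
  interpret BX: module "A X" "Bn X" by (rule Bmod_module[OF X])
  let ?T = "{s. x s \<noteq> (\<lambda>Y. 0)}"
  note T = Bmod_carrierD(1,2)[OF x]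
  have gens: "(\<lambda>s. x s \<odot>\<^bsub>Bn X\<^esub> Bgen top1 s) \<in> ?T \<rightarrow> carrier (Bn X)"
    using Bgen_carrier[OF X] Bmod_carrierD(3)[OF x] T(2) by blast
  have "e X (lift X x) = (\<Oplus>\<^bsub>G X\<^esub>s\<in>?T. e X (x s \<odot>\<^bsub>F X\<^esub> resF X (M s) (gen_lift s)))"
    unfolding lift_def
    by (intro hom_finsum[OF FX.abelian_group_axioms GX.abelian_group_axioms
          presheaf_mod_hom_closed[OF e_hom X] presheaf_mod_hom_add[OF e_hom X] T(1)
          lift_terms_closed[OF X x T(2)]])
  also have "\<dots> = (\<Oplus>\<^bsub>G X\<^esub>s\<in>?T. f X (x s \<odot>\<^bsub>Bn X\<^esub> Bgen top1 s))"
  proof (intro GX.finsum_cong')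
    fix s assume "s \<in> ?T"
    then have s: "s \<in> Bsym S arr n X" using T(2) by blast
    note Ms = Bsym_meet_list[OF X s]
    have "e X (x s \<odot>\<^bsub>F X\<^esub> resF X (M s) (gen_lift s)) = x s \<odot>\<^bsub>G X\<^esub> resG X (M s) (f (M s) (Bgen top1 s))"
      using presheaf_mod_hom_smult[OF e_hom X Bmod_carrierD(3)[OF x] res_gen_lift_closed[OF X s]]
        presheaf_mod_hom_natural[OF e_hom X Ms(1,2) gen_lift(1)[OF X s]] gen_lift(2)[OF X s] by simp
    also have "\<dots> = f X (x s \<odot>\<^bsub>Bn X\<^esub> Bgen top1 s)"
      using presheaf_mod_hom_natural[OF f X Ms(1,2) Bgen_carrier[OF Ms(1,3)]]
        presheaf_mod_hom_smult[OF f X Bmod_carrierD(3)[OF x] Bgen_carrier[OF X s]]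
      by (simp add: Bres_def)
    finally show "e X (x s \<odot>\<^bsub>F X\<^esub> resF X (M s) (gen_lift s)) = f X (x s \<odot>\<^bsub>Bn X\<^esub> Bgen top1 s)" .
  next
    show "(\<lambda>s. f X (x s \<odot>\<^bsub>Bn X\<^esub> Bgen top1 s)) \<in> ?T \<rightarrow> carrier (G X)"
      using gens presheaf_mod_hom_closed[OF f X] by blast
  qed simp
  also have "\<dots> = f X (\<Oplus>\<^bsub>Bn X\<^esub>s\<in>?T. x s \<odot>\<^bsub>Bn X\<^esub> Bgen top1 s)"
    by (rule hom_finsum[OF BX.abelian_group_axioms GX.abelian_group_axioms
          presheaf_mod_hom_closed[OF f X] presheaf_mod_hom_add[OF f X] T(1) gens, symmetric])
  also have "\<dots> = f X x" by (simp only: Bmod_basis_expansion[OF X x])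
  finally show ?thesis .
qed

end

theorem proposition3p5:
  fixes S :: "'a set" and arr :: "'a \<Rightarrow> 'a \<Rightarrow> bool" and top1 :: 'a and n :: nat
  assumes "info_structure S arr top1"
  shows "projective TYPE('m) TYPE('n) S arr top1 (Bmod S arr top1 n) Bres"
proof -
  interpret information_structure S arr top1 by (rule information_structure.intro[OF assms])
  show ?thesis unfolding projective_def
  proof (intro conjI allI impI)
    show "presheaf_mod S arr top1 (Bmod S arr top1 n) Bres" by (rule Bmod_presheaf)
    fix F :: "'a \<Rightarrow> ('a \<Rightarrow> real, 'm) module" and resF and G :: "'a \<Rightarrow> ('a \<Rightarrow> real, 'n) module"
      and resG e f
    assume "presheaf_mod S arr top1 F resF" "presheaf_mod S arr top1 G resG"
      "presheaf_mod_epi S arr top1 F resF G resG e"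
      "presheaf_mod_hom S arr top1 (Bmod S arr top1 n) Bres G resG f"
    then interpret Bn_lifting S arr top1 n F resF G resG e f
      by unfold_locales (rule assms)
    show "\<exists>g. presheaf_mod_hom S arr top1 (Bmod S arr top1 n) Bres F resF g \<and>
        (\<forall>X\<in>S. \<forall>x\<in>carrier (Bmod S arr top1 n X). e X (g X x) = f X x)"
      using lift_hom lift_lifts by blast
  qed
qed

end
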